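(* Let $G$ be a graph, $R \subseteq V(G)$, $v_0\in V(G)$, and let $P$ be a shortest path from $v_0$ to $R$. Then for every milestone $v\in M_R(P)$, every vertex $u$ in the neutral prefix of $v$ in $P$, and every $y\in R$, it holds that $\mathrm{dist}(u,y)=|P[u,v]|+\mathrm{dist}(v,y)$.
   Context: $G$ is an unweighted undirected graph and $\mathrm{dist}$ is its shortest-path distance; $|Q|$ denotes the number of edges of a path $Q$ and $P[a,b]$ the subpath of $P$ between vertices $a,b$ of $P$. A shortest path from $v_0$ to $R$ is a path of length $\mathrm{dist}(v_0,R)=\min_{y\in R}\mathrm{dist}(v_0,y)$ from $v_0$ to a vertex of $R$; let $x$ be its unique vertex in $R$. Order $V(P)$ by $\le_P$: $v\le_P u$ iff $u\in V(P[v,x])$ (so the order goes from $v_0$ towards $x$). For $z\in V(G)$, the distance profile $\operatorname{prof}_{R,x}[z]\colon R\to\mathbb{Z}$ is $\operatorname{prof}_{R,x}[z](s)=\mathrm{dist}(z,s)-\mathrm{dist}(z,x)$. A vertex $v\in V(P)$ is a milestone of $P$ if $v=x$ or $\operatorname{prof}_{R,x}[v]\ne\operatorname{prof}_{R,x}[u]$ where $u$ is the successor of $v$ in $\le_P$; $M_R(P)$ is the set of milestones. For $v\in M_R(P)$, the neutral prefix of $v$ in $P$ is the vertex set of the maximal subpath $Q$ of $P[v_0,v]$ such that $v$ is the only milestone of $P$ belonging to $Q$. *)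

theory Defs
  imports "HOL-Library.Extended_Nat"
begin

definition graph :: "'a set \<Rightarrow> ('a \<Rightarrow> 'a \<Rightarrow> bool) \<Rightarrow> bool" where
  "graph V E \<longleftrightarrow> (\<forall>x y. E x y \<longrightarrow> x \<in> V \<and> y \<in> V) \<and> (\<forall>x y. E x y \<longrightarrow> E y x) \<and> (\<forall>x. \<not> E x x)"

text \<open>Walks as nonempty vertex lists; the number of edges is length - 1.\<close>
definition walk :: "'a set \<Rightarrow> ('a \<Rightarrow> 'a \<Rightarrow> bool) \<Rightarrow> 'a list \<Rightarrow> bool" where
  "walk V E xs \<longleftrightarrow> xs \<noteq> [] \<and> set xs \<subseteq> V \<and> (\<forall>i. Suc i < length xs \<longrightarrow> E (xs ! i) (xs ! Suc i))"

definition gpath :: "'a set \<Rightarrow> ('a \<Rightarrow> 'a \<Rightarrow> bool) \<Rightarrow> 'a list \<Rightarrow> bool" where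
  "gpath V E xs \<longleftrightarrow> walk V E xs \<and> distinct xs"

text \<open>Shortest-path distance (infinity if no walk exists).\<close>
definition dist :: "'a set \<Rightarrow> ('a \<Rightarrow> 'a \<Rightarrow> bool) \<Rightarrow> 'a \<Rightarrow> 'a \<Rightarrow> enat" where
  "dist V E a b = Inf {enat (length xs - 1) | xs. walk V E xs \<and> hd xs = a \<and> last xs = b}"

definition dist_set :: "'a set \<Rightarrow> ('a \<Rightarrow> 'a \<Rightarrow> bool) \<Rightarrow> 'a \<Rightarrow> 'a set \<Rightarrow> enat" where
  "dist_set V E a R = (INF y\<in>R. dist V E a y)"

definition shortest_path_to :: "'a set \<Rightarrow> ('a \<Rightarrow> 'a \<Rightarrow> bool) \<Rightarrow> 'a \<Rightarrow> 'a set \<Rightarrow> 'a list \<Rightarrow> bool" where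
  "shortest_path_to V E v0 R P \<longleftrightarrow> gpath V E P \<and> hd P = v0 \<and> last P \<in> R
     \<and> enat (length P - 1) = dist_set V E v0 R"

text \<open>Distance profile prof_{R,x}[z] : R \<rightarrow> int, represented as a partial function
 (None outside R; None also for targets at infinite distance).\<close>
definition prof :: "'a set \<Rightarrow> ('a \<Rightarrow> 'a \<Rightarrow> bool) \<Rightarrow> 'a set \<Rightarrow> 'a \<Rightarrow> 'a \<Rightarrow> 'a \<Rightarrow> int option" where
  "prof V E R x z = (\<lambda>s. if s \<in> R then
      (case (dist V E z s, dist V E z x) of
         (enat a, enat b) \<Rightarrow> Some (int a - int b)
       | _ \<Rightarrow> None)
     else None)"

definition milestone_idx :: "'a set \<Rightarrow> ('a \<Rightarrow> 'a \<Rightarrow> bool) \<Rightarrow> 'a set \<Rightarrow> 'a list \<Rightarrow> nat \<Rightarrow> bool" where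
  "milestone_idx V E R P i \<longleftrightarrow> i < length P \<and>
     (i = length P - 1 \<or> prof V E R (last P) (P ! i) \<noteq> prof V E R (last P) (P ! Suc i))"

definition milestones :: "'a set \<Rightarrow> ('a \<Rightarrow> 'a \<Rightarrow> bool) \<Rightarrow> 'a set \<Rightarrow> 'a list \<Rightarrow> 'a set" where
  "milestones V E R P = {P ! i | i. milestone_idx V E R P i}"

definition neutral_prefix :: "'a set \<Rightarrow> ('a \<Rightarrow> 'a \<Rightarrow> bool) \<Rightarrow> 'a set \<Rightarrow> 'a list \<Rightarrow> 'a \<Rightarrow> 'a set" where
  "neutral_prefix V E R P v = {P ! i | i. \<exists>j. j < length P \<and> P ! j = v \<and> i \<le> j \<and>
       (\<forall>k. i \<le> k \<and> k < j \<longrightarrow> \<not> milestone_idx V E R P k)}"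

text \<open>Position of a vertex on a (distinct) path, and |P[a,b]|, the number of edges
 of the subpath of P between its vertices a and b.\<close>
definition pos :: "'a list \<Rightarrow> 'a \<Rightarrow> nat" where
  "pos P a = (THE i. i < length P \<and> P ! i = a)"

definition subpath_len :: "'a list \<Rightarrow> 'a \<Rightarrow> 'a \<Rightarrow> nat" where
  "subpath_len P a b = (if pos P a \<le> pos P b then pos P b - pos P a else pos P a - pos P b)"

end

theory Submission
  imports Defs
begin

(* Every vertex P!k of a shortest path to R lies at distance |P| - 1 - k from its endpoint
   x = last P, since a shorter detour would shorten P. Along the neutral prefix of v the profile
   prof_{R,x} does not change, so dist(u, y) - dist(u, x) = dist(v, y) - dist(v, x) for y in R,
   and dist(u, x) - dist(v, x) is exactly |P[u,v]|. *)

lemma dist_le_walk_length: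
  assumes "walk V E xs"
  shows "dist V E (hd xs) (last xs) \<le> enat (length xs - 1)"
  unfolding dist_def by (rule Inf_lower) (use assms in blast)

lemma dist_enatE:
  assumes "dist V E a b = enat m"
  obtains xs where "walk V E xs" "hd xs = a" "last xs = b" "length xs - 1 = m"
proof -
  let ?S = "{enat (length xs - 1) | xs. walk V E xs \<and> hd xs = a \<and> last xs = b}"
  have "?S \<noteq> {}"
    using assms unfolding dist_def by (metis Inf_empty top_enat_def enat.distinct(2))
  then have "Inf ?S \<in> ?S"
    unfolding Inf_enat_def by (auto intro: LeastI)
  with assms that show thesis
    unfolding dist_def by auto
qed

lemma walk_Cons:
  "walk V E (a # xs) \<longleftrightarrow> a \<in> V \<and> (xs = [] \<or> E a (hd xs) \<and> walk V E xs)"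
  by (cases xs) (auto simp: walk_def nth_Cons split: nat.splits)

lemma walk_append:
  assumes "walk V E xs" "walk V E ys" "last xs = hd ys"
  shows "walk V E (xs @ tl ys)"
  using assms
proof (induction xs)
  case Nil
  then show ?case by (simp add: walk_def)
next
  case (Cons a xs)
  show ?case
  proof (cases xs)
    case Nil
    then show ?thesis
      using Cons.prems by (cases ys) (auto simp: walk_Cons)
  next
    case (Cons b zs)
    then show ?thesis
      using Cons.prems Cons.IH by (auto simp: walk_Cons)
  qed
qed

lemma dist_triangle: "dist V E a c \<le> dist V E a b + dist V E b c"
proof (cases "dist V E a b" "dist V E b c" rule: enat2_cases)
  case (enat_enat m k)
  obtain xs where xs: "walk V E xs" "hd xs = a" "last xs = b" "length xs - 1 = m"
    using enat_enat(1) by (rule dist_enatE)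
  obtain ys where ys: "walk V E ys" "hd ys = b" "last ys = c" "length ys - 1 = k"
    using enat_enat(2) by (rule dist_enatE)
  obtain y ys' where ys_Cons: "ys = y # ys'"
    using ys(1) by (cases ys) (auto simp: walk_def)
  have "xs \<noteq> []"
    using xs(1) by (simp add: walk_def)
  then have "hd (xs @ tl ys) = a" "last (xs @ tl ys) = c" "length (xs @ tl ys) - 1 = m + k"
    using xs ys ys_Cons by (auto simp: neq_Nil_conv)
  then show ?thesis
    using dist_le_walk_length[OF walk_append[OF xs(1) ys(1)]] enat_enat xs(3) ys(2) by simp
qed auto

lemma dist_self: "a \<in> V \<Longrightarrow> dist V E a a = 0"
  using dist_le_walk_length[of V E "[a]"] by (simp add: walk_def zero_enat_def[symmetric])

lemma dist_edge_le: "E a b \<Longrightarrow> a \<in> V \<Longrightarrow> b \<in> V \<Longrightarrow> dist V E a b \<le> 1"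
  using dist_le_walk_length[of V E "[a, b]"] by (simp add: walk_def one_enat_def)

lemma dist_nth_walk_le:
  assumes "walk V E xs" "i \<le> j" "j < length xs"
  shows "dist V E (xs ! i) (xs ! j) \<le> enat (j - i)"
  using assms(2,3)
proof (induction j rule: dec_induct)
  case base
  then have "xs ! i \<in> V"
    using assms(1) by (auto simp: walk_def)
  then show ?case
    by (simp add: dist_self zero_enat_def[symmetric])
next
  case (step j)
  have "dist V E (xs ! i) (xs ! Suc j) \<le> dist V E (xs ! i) (xs ! j) + dist V E (xs ! j) (xs ! Suc j)"
    by (rule dist_triangle)
  also have "\<dots> \<le> enat (j - i) + 1"
    using step assms(1) by (intro add_mono dist_edge_le) (auto simp: walk_def)
  finally show ?case
    using step(1) by (simp add: one_enat_def Suc_diff_le)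
qed

lemma shortest_path_to_dist_last:
  assumes "shortest_path_to V E v0 R P" "k < length P"
  shows "dist V E (P ! k) (last P) = enat (length P - 1 - k)"
proof -
  have P: "walk V E P" "hd P = v0" "last P \<in> R" "enat (length P - 1) = dist_set V E v0 R"
    using assms(1) by (auto simp: shortest_path_to_def gpath_def)
  then have "P \<noteq> []"
    by (simp add: walk_def)
  then have ends: "P ! 0 = v0" "last P = P ! (length P - 1)"
    using P(2) by (simp_all add: hd_conv_nth last_conv_nth)
  have upper: "dist V E (P ! k) (last P) \<le> enat (length P - 1 - k)"
    using dist_nth_walk_le[OF P(1), of k "length P - 1"] assms(2) ends(2) by simp
  have "enat (length P - 1) \<le> dist V E v0 (last P)"
    unfolding P(4) dist_set_def using P(3) by (rule INF_lower)
  also have "\<dots> \<le> dist V E v0 (P ! k) + dist V E (P ! k) (last P)"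
    by (rule dist_triangle)
  also have "\<dots> \<le> enat k + dist V E (P ! k) (last P)"
    using dist_nth_walk_le[OF P(1), of 0 k] assms(2) ends(1) by (intro add_right_mono) simp
  finally show ?thesis
    using upper by (cases "dist V E (P ! k) (last P)") auto
qed

lemma prof_eq_if_no_milestone_between:
  assumes "\<forall>k. i \<le> k \<and> k < j \<longrightarrow> \<not> milestone_idx V E R P k" "i \<le> j" "j < length P"
  shows "prof V E R (last P) (P ! i) = prof V E R (last P) (P ! j)"
  using assms(2,3)
proof (induction j rule: dec_induct)
  case base
  then show ?case by simp
next
  case (step j)
  then have "\<not> milestone_idx V E R P j"
    using assms(1) by simp
  with step show ?case
    unfolding milestone_idx_def by auto
qed

lemma dist_eq_if_prof_eq:
  assumes "prof V E R x u = prof V E R x v"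
    and "dist V E u x = enat a" "dist V E v x = enat b" "y \<in> R"
  shows "dist V E u y + enat b = dist V E v y + enat a"
proof -
  have prof_y: "prof V E R x u y = prof V E R x v y"
    using assms(1) by simp
  \<comment> \<open>the profile is None exactly where a distance is infinite, so those cases match up\<close>
  show ?thesis
  proof (cases "dist V E u y" "dist V E v y" rule: enat2_cases)
    case (enat_enat c d)
    then have "int c - int a = int d - int b"
      using prof_y assms(2-4) by (simp add: prof_def)
    then have "c + b = d + a"
      by linarith
    then show ?thesis
      using enat_enat by simp
  qed (use prof_y assms(2-4) in \<open>simp_all add: prof_def\<close>)
qed

lemma pos_nth: "distinct P \<Longrightarrow> i < length P \<Longrightarrow> pos P (P ! i) = i"
  unfolding pos_def by (rule the_equality) (auto simp: nth_eq_iff_index_eq)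

theorem lemma3p1:
  fixes V :: "'a set" and E :: "'a \<Rightarrow> 'a \<Rightarrow> bool" and R :: "'a set"
    and v0 :: 'a and P :: "'a list" and v u y :: 'a
  assumes "graph V E" and "R \<subseteq> V" and "v0 \<in> V"
    and "shortest_path_to V E v0 R P"
    and "v \<in> milestones V E R P"
    and "u \<in> neutral_prefix V E R P v"
    and "y \<in> R"
  shows "dist V E u y
           = enat (subpath_len P u v) + dist V E v y"
proof -
  obtain i j where ij: "u = P ! i" "v = P ! j" "i \<le> j" "j < length P"
    and neutral: "\<forall>k. i \<le> k \<and> k < j \<longrightarrow> \<not> milestone_idx V E R P k"
    using assms(6) unfolding neutral_prefix_def by blast
  define n where "n = length P - 1"
  have "distinct P"
    using assms(4) by (simp add: shortest_path_to_def gpath_def)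
  then have "subpath_len P u v = j - i"
    using ij by (simp add: subpath_len_def pos_nth)
  have "prof V E R (last P) u = prof V E R (last P) v"
    using prof_eq_if_no_milestone_between[OF neutral ij(3,4)] ij by simp
  moreover have "dist V E u (last P) = enat (n - i)" "dist V E v (last P) = enat (n - j)"
    using shortest_path_to_dist_last[OF assms(4)] ij unfolding n_def by simp_all
  ultimately have "dist V E u y + enat (n - j) = dist V E v y + enat (n - i)"
    using assms(7) by (rule dist_eq_if_prof_eq)
  also have "\<dots> = (enat (j - i) + dist V E v y) + enat (n - j)"
    using ij unfolding n_def by (simp add: ac_simps)
  finally show ?thesis
    using \<open>subpath_len P u v = j - i\<close> by simp
qed

end
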